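(* Let $G$ be a $\Delta$-regular graph on $n$ vertices in which every two adjacent vertices have at least $\lambda$ common neighbors. (i) If $\Delta-\lambda\equiv0\pmod 2$, then $\alpha_{\mathrm{od}}(G)\le\frac{\Delta-\lambda-1}{2\Delta-\lambda-1}n$. (ii) If $\Delta-\lambda\equiv1\pmod2$, then $\alpha_{\mathrm{od}}(G)\le\frac{\Delta-\lambda}{2\Delta-\lambda}n$.
   Context: An odd independent set in $G=(V,E)$ is an independent set $S$ such that every $v\in V\setminus S$ has either no neighbor or an odd number of neighbors in $S$; $\alpha_{\mathrm{od}}(G)$ is its maximum size. *)

theory Defs
  imports Complex_Main
begin

definition simple_graph :: "'a set \<Rightarrow> ('a \<Rightarrow> 'a \<Rightarrow> bool) \<Rightarrow> bool" where
  "simple_graph V E \<longleftrightarrow> finite V \<and> (\<forall>u v. E u v \<longrightarrow> u \<in> V \<and> v \<in> V)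
     \<and> (\<forall>u v. E u v \<longrightarrow> E v u) \<and> (\<forall>v. \<not> E v v)"

definition nbrs :: "'a set \<Rightarrow> ('a \<Rightarrow> 'a \<Rightarrow> bool) \<Rightarrow> 'a \<Rightarrow> 'a set" where
  "nbrs V E v = {u \<in> V. E v u}"

definition regular_graph :: "'a set \<Rightarrow> ('a \<Rightarrow> 'a \<Rightarrow> bool) \<Rightarrow> nat \<Rightarrow> bool" where
  "regular_graph V E d \<longleftrightarrow> (\<forall>v \<in> V. card (nbrs V E v) = d)"

definition independent_set :: "'a set \<Rightarrow> ('a \<Rightarrow> 'a \<Rightarrow> bool) \<Rightarrow> 'a set \<Rightarrow> bool" where
  "independent_set V E S \<longleftrightarrow> S \<subseteq> V \<and> (\<forall>u \<in> S. \<forall>v \<in> S. \<not> E u v)"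

definition odd_independent_set :: "'a set \<Rightarrow> ('a \<Rightarrow> 'a \<Rightarrow> bool) \<Rightarrow> 'a set \<Rightarrow> bool" where
  "odd_independent_set V E S \<longleftrightarrow> independent_set V E S \<and>
     (\<forall>v \<in> V - S. card (nbrs V E v \<inter> S) = 0 \<or> odd (card (nbrs V E v \<inter> S)))"

definition alpha_od :: "'a set \<Rightarrow> ('a \<Rightarrow> 'a \<Rightarrow> bool) \<Rightarrow> nat" where
  "alpha_od V E = Max {card S | S. odd_independent_set V E S}"

end

theory Submission
  imports Defs
begin

text \<open>Count the edges between an odd independent set \<open>S\<close> and its complement. Each vertex of
  \<open>S\<close> sends all of its \<open>\<Delta>\<close> edges out of \<open>S\<close>. A vertex \<open>v \<notin> S\<close> with a neighbour \<open>u \<in> S\<close>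
  has at least \<open>\<lambda>\<close> further neighbours outside \<open>S\<close>, namely the common neighbours of \<open>u\<close>
  and \<open>v\<close>; so it has at most \<open>\<Delta> - \<lambda>\<close> neighbours in \<open>S\<close>, and this number is odd, hence at
  most the largest odd \<open>c \<le> \<Delta> - \<lambda>\<close>. Thus \<open>\<Delta> |S| \<le> c (n - |S|)\<close>.\<close>

lemma simple_graph_finite_nbrs: "simple_graph V E \<Longrightarrow> finite (nbrs V E v)"
  by (simp add: simple_graph_def nbrs_def)

lemma alpha_od_attained:
  assumes "simple_graph V E"
  obtains S where "odd_independent_set V E S" and "alpha_od V E = card S"
proof -
  let ?sizes = "{card S | S. odd_independent_set V E S}"
  have "?sizes \<subseteq> {0..card V}"
    using assms by (auto simp: simple_graph_def odd_independent_set_def independent_set_def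
        intro: card_mono)
  then have "finite ?sizes"
    using finite_subset by blast
  moreover have "odd_independent_set V E {}"
    by (simp add: odd_independent_set_def independent_set_def)
  then have "?sizes \<noteq> {}"
    by blast
  ultimately have "Max ?sizes \<in> ?sizes"
    by (rule Max_in)
  then show ?thesis
    using that unfolding alpha_od_def by auto
qed

lemma codegree_lt_degree:
  assumes G: "simple_graph V E" and R: "regular_graph V E D"
    and L: "\<forall>u \<in> V. \<forall>v \<in> V. E u v \<longrightarrow> card (nbrs V E u \<inter> nbrs V E v) \<ge> lam"
    and "w \<in> V" and "D > 0"
  shows "lam < D"
proof -
  have deg: "card (nbrs V E w) = D"
    using R \<open>w \<in> V\<close> by (simp add: regular_graph_def)
  then obtain x where x: "x \<in> nbrs V E w"
    using \<open>D > 0\<close> by fastforce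
  then have "lam \<le> card (nbrs V E w \<inter> nbrs V E x)"
    using L \<open>w \<in> V\<close> by (simp add: nbrs_def)
  also have "\<dots> \<le> card (nbrs V E w - {x})"
    using G by (intro card_mono) (auto simp: simple_graph_finite_nbrs simple_graph_def nbrs_def)
  also have "\<dots> = D - 1"
    using x deg G by (simp add: simple_graph_finite_nbrs)
  finally show ?thesis
    using \<open>D > 0\<close> by linarith
qed

lemma sum_card_nbrs_Int_independent:
  assumes G: "simple_graph V E" and S: "independent_set V E S"
  shows "(\<Sum>v\<in>V - S. card (nbrs V E v \<inter> S)) = (\<Sum>u\<in>S. card (nbrs V E u))"
proof -
  have SV: "S \<subseteq> V"
    using S by (simp add: independent_set_def)
  have fin: "finite V" "finite S"
    using G SV finite_subset by (auto simp: simple_graph_def)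
  have "(\<Sum>v\<in>V - S. card (nbrs V E v \<inter> S)) = (\<Sum>v\<in>V - S. \<Sum>u\<in>S. of_bool (E v u))"
    using fin SV by (intro sum.cong) (auto simp: nbrs_def Int_def intro: arg_cong[where f = card])
  also have "\<dots> = (\<Sum>u\<in>S. \<Sum>v\<in>V - S. of_bool (E v u))"
    by (rule sum.swap)
  also have "\<dots> = (\<Sum>u\<in>S. card (nbrs V E u))"
    using fin G S by (intro sum.cong)
      (auto simp: nbrs_def simple_graph_def independent_set_def intro!: arg_cong[where f = card])
  finally show ?thesis .
qed

lemma card_nbrs_Int_odd_independent:
  assumes G: "simple_graph V E" and R: "regular_graph V E D"
    and L: "\<forall>u \<in> V. \<forall>v \<in> V. E u v \<longrightarrow> card (nbrs V E u \<inter> nbrs V E v) \<ge> lam"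
    and S: "odd_independent_set V E S" and v: "v \<in> V - S"
    and nonempty: "nbrs V E v \<inter> S \<noteq> {}"
  shows "odd (card (nbrs V E v \<inter> S))" and "card (nbrs V E v \<inter> S) + lam \<le> D"
proof -
  have fin: "finite (nbrs V E v)"
    using G by (rule simple_graph_finite_nbrs)
  have "card (nbrs V E v \<inter> S) = 0 \<or> odd (card (nbrs V E v \<inter> S))"
    using S v by (simp add: odd_independent_set_def)
  then show "odd (card (nbrs V E v \<inter> S))"
    using fin nonempty by auto
  obtain u where u: "u \<in> S" "E v u"
    using nonempty by (auto simp: nbrs_def)
  have "lam \<le> card (nbrs V E u \<inter> nbrs V E v)"
    using L u G v by (auto simp: simple_graph_def)
  also have "\<dots> \<le> card (nbrs V E v - S)"
    using fin S u by (intro card_mono)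
      (auto simp: nbrs_def odd_independent_set_def independent_set_def)
  finally have "card (nbrs V E v \<inter> S) + lam \<le> card (nbrs V E v \<inter> S) + card (nbrs V E v - S)"
    by simp
  also have "\<dots> = D"
    using card_Int_Diff[OF fin] R v by (simp add: regular_graph_def)
  finally show "card (nbrs V E v \<inter> S) + lam \<le> D" .
qed

lemma odd_independent_set_card_bound:
  assumes G: "simple_graph V E" and R: "regular_graph V E D"
    and L: "\<forall>u \<in> V. \<forall>v \<in> V. E u v \<longrightarrow> card (nbrs V E u \<inter> nbrs V E v) \<ge> lam"
    and S: "odd_independent_set V E S"
    and c: "\<And>k. k + lam \<le> D \<Longrightarrow> odd k \<Longrightarrow> k \<le> c"
  shows "card S * (D + c) \<le> c * card V"
proof -
  have SV: "S \<subseteq> V" and indep: "independent_set V E S"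
    using S by (auto simp: odd_independent_set_def independent_set_def)
  have fin: "finite S" "finite V"
    using G SV finite_subset by (auto simp: simple_graph_def)
  have "card S * D = (\<Sum>u\<in>S. card (nbrs V E u))"
    using R SV by (simp add: regular_graph_def subset_iff)
  also have "\<dots> = (\<Sum>v\<in>V - S. card (nbrs V E v \<inter> S))"
    using sum_card_nbrs_Int_independent[OF G indep] by simp
  also have "\<dots> \<le> (\<Sum>v\<in>V - S. c)"
    using card_nbrs_Int_odd_independent[OF G R L S] c
    by (intro sum_mono) (metis card.empty le0)
  also have "\<dots> = c * (card V - card S)"
    using fin SV by (simp add: card_Diff_subset)
  finally have "card S * D \<le> c * card V - c * card S"
    by (simp add: diff_mult_distrib2)
  moreover have "c * card S \<le> c * card V"
    using card_mono[OF fin(2) SV] by simp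
  ultimately have "card S * D + c * card S \<le> c * card V"
    by linarith
  then show ?thesis
    by (simp add: algebra_simps)
qed

lemma real_le_ratio_of_mult_le:
  fixes s n D c :: nat
  assumes "s * (D + c) \<le> c * n" and "D + c > 0"
  shows "real s \<le> real c / (real D + real c) * real n"
proof -
  have "real s * (real D + real c) \<le> real c * real n"
    using assms(1) by (metis of_nat_add of_nat_le_iff of_nat_mult)
  moreover have "real D + real c > 0"
    using assms(2) by linarith
  ultimately show ?thesis
    by (simp add: field_simps)
qed

theorem proposition5:
  fixes V :: "'a set" and E :: "'a \<Rightarrow> 'a \<Rightarrow> bool" and D lam :: nat
  assumes "simple_graph V E"
    and "regular_graph V E D"
    and "\<forall>u \<in> V. \<forall>v \<in> V. E u v \<longrightarrow> card (nbrs V E u \<inter> nbrs V E v) \<ge> lam"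
  shows "(even (int D - int lam) \<longrightarrow>
           real (alpha_od V E) \<le> (real D - real lam - 1) / (2 * real D - real lam - 1) * real (card V))
       \<and> (odd (int D - int lam) \<longrightarrow>
           real (alpha_od V E) \<le> (real D - real lam) / (2 * real D - real lam) * real (card V))"
proof -
  obtain S where S: "odd_independent_set V E S" and alpha: "alpha_od V E = card S"
    using alpha_od_attained[OF assms(1)] by blast
  have "card S \<le> card V"
    using S assms(1) by (auto simp: simple_graph_def odd_independent_set_def independent_set_def
        intro: card_mono)
  consider "V = {}" | "D = 0" | "lam < D"
    using codegree_lt_degree[OF assms] by blast
  then show ?thesis
  proof cases
    case 1
    then show ?thesis
      using alpha \<open>card S \<le> card V\<close> by simp
  next
    case 2
    \<comment> \<open>both ratios equal 1 (for the second, \<open>\<lambda>\<close> is odd and so nonzero)\<close>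
    then show ?thesis
      using alpha \<open>card S \<le> card V\<close> by (cases "lam = 0") auto
  next
    case 3
    have "real (card S) \<le> (real D - real lam - 1) / (2 * real D - real lam - 1) * real (card V)"
      if "even (int D - int lam)"
    proof -
      have "even (D - lam)"
        using that 3 by (simp add: even_diff_iff)
      then have "card S * (D + (D - lam - 1)) \<le> (D - lam - 1) * card V"
        by (intro odd_independent_set_card_bound[OF assms S]) presburger
      from real_le_ratio_of_mult_le[OF this] show ?thesis
        using 3 by (simp add: algebra_simps)
    qed
    moreover have "real (card S) \<le> (real D - real lam) / (2 * real D - real lam) * real (card V)"
    proof -
      have "card S * (D + (D - lam)) \<le> (D - lam) * card V"
        by (intro odd_independent_set_card_bound[OF assms S]) simp
      from real_le_ratio_of_mult_le[OF this] show ?thesis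
        using 3 by (simp add: algebra_simps)
    qed
    ultimately show ?thesis
      using alpha by simp
  qed
qed

end
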